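(* For every $\ell\ge2$, $E_\ell\le\max\Big\{\frac1\ell\sum_{i=0}^{\ell-1}\log_\ell D_i : \{D_i\}_{i=0}^{\ell-1}\in\mathcal{V}^{(\ell)}_{LP}\Big\}$, where $\mathcal{V}^{(\ell)}_{LP}$ is the set of all $\ell$-dimensions LP-valid sequences.
   Context: A kernel of dimension $\ell$ is a bijection $g:\{0,1\}^\ell\to\{0,1\}^\ell$. ${\bf a}\bullet{\bf b}$ denotes concatenation, $d_H$ Hamming distance. Partial distances: $D_{min}^{(i)}=\min\{d_H(g({\bf w}\bullet 0\bullet{\bf u}),g({\bf w}\bullet 1\bullet {\bf v})) : {\bf w}\in\{0,1\}^i,\ {\bf u},{\bf v}\in\{0,1\}^{\ell-i-1}\}$; exponent $E(g)=\frac1\ell\sum_{i=0}^{\ell-1}\log_\ell D_{min}^{(i)}$; $E_\ell=\max_g E(g)$ over all kernels of dimension $\ell$. Let $d(n,k)$ be the largest possible minimum distance of a binary code of length $n$ with $2^k$ codewords, and $P_i(x)=\sum_{m=0}^{i}(-1)^m\binom{x}{m}\binom{\ell-x}{i-m}$. A sequence $\{D_i\}_{i=0}^{\ell-1}$ of non-negative integers, monotone non-decreasing with $D_i\le d(\ell,\ell-i)$, is an $\ell$-dimensions LP-valid sequence if there exist non-negative reals $\bar B_i^{(k)}$ ($k\in\{0,\dots,\ell-1\}$, $D_k\le i\le\ell$) with: (a) $\sum_{i=D_{\ell-r}}^{\ell}\bar B_i^{(\ell-r)}=2^r-1$ for $r\in\{1,\dots,\ell\}$; (b) $\bar B_i^{(\ell-r)}\ge\bar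 B_i^{(\ell-r+1)}$ for $r\in\{1,\dots,\ell-1\}$, $D_{\ell-r+1}\le i\le\ell$; (c) $\sum_{j=D_{\ell-r}}^{\ell}\bar B_j^{(\ell-r)}P_i(j)\ge-\binom{\ell}{i}$ for $i\in\{0,\dots,\ell\}$, $r\in\{1,\dots,\ell\}$. *)

theory Defs
  imports Complex_Main
begin

definition words :: "nat \<Rightarrow> bool list set" where
  "words n = {xs. length xs = n}"

definition hamming :: "bool list \<Rightarrow> bool list \<Rightarrow> nat" where
  "hamming x y = card {j. j < length x \<and> x ! j \<noteq> y ! j}"

definition is_kernel :: "nat \<Rightarrow> (bool list \<Rightarrow> bool list) \<Rightarrow> bool" where
  "is_kernel l g \<longleftrightarrow> bij_betw g (words l) (words l)"

definition partial_dist :: "nat \<Rightarrow> (bool list \<Rightarrow> bool list) \<Rightarrow> nat \<Rightarrow> nat" where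
  "partial_dist l g i = Min {hamming (g (w @ [False] @ u)) (g (w @ [True] @ v)) | w u v.
      w \<in> words i \<and> u \<in> words (l - i - 1) \<and> v \<in> words (l - i - 1)}"

definition kernel_exponent :: "nat \<Rightarrow> (bool list \<Rightarrow> bool list) \<Rightarrow> real" where
  "kernel_exponent l g = (1 / real l) * (\<Sum>i<l. log (real l) (real (partial_dist l g i)))"

definition E_max :: "nat \<Rightarrow> real" where
  "E_max l = Max {kernel_exponent l g | g. is_kernel l g}"

definition min_dist :: "bool list set \<Rightarrow> nat" where
  "min_dist C = Min {hamming x y | x y. x \<in> C \<and> y \<in> C \<and> x \<noteq> y}"

definition best_dist :: "nat \<Rightarrow> nat \<Rightarrow> nat" where
  "best_dist n k = Max {min_dist C | C. C \<subseteq> words n \<and> card C = 2 ^ k}"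

definition kraw :: "nat \<Rightarrow> nat \<Rightarrow> nat \<Rightarrow> real" where
  "kraw l i x = (\<Sum>m\<le>i. (-1) ^ m * real (x choose m) * real ((l - x) choose (i - m)))"

definition LP_valid :: "nat \<Rightarrow> (nat \<Rightarrow> nat) \<Rightarrow> bool" where
  "LP_valid l D \<longleftrightarrow>
     (\<forall>i j. i \<le> j \<and> j < l \<longrightarrow> D i \<le> D j) \<and>
     (\<forall>i<l. D i \<le> best_dist l (l - i)) \<and>
     (\<exists>B :: nat \<Rightarrow> nat \<Rightarrow> real.
        (\<forall>k<l. \<forall>i. D k \<le> i \<and> i \<le> l \<longrightarrow> 0 \<le> B k i) \<and>
        (\<forall>r\<in>{1..l}. (\<Sum>i=D (l - r)..l. B (l - r) i) = 2 ^ r - 1) \<and>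
        (\<forall>r\<in>{1..l-1}. \<forall>i. D (l - r + 1) \<le> i \<and> i \<le> l \<longrightarrow> B (l - r) i \<ge> B (l - r + 1) i) \<and>
        (\<forall>r\<in>{1..l}. \<forall>i\<le>l.
            (\<Sum>j=D (l - r)..l. B (l - r) j * kraw l i j) \<ge> - real (l choose i)))"

definition seq_value :: "nat \<Rightarrow> (nat \<Rightarrow> nat) \<Rightarrow> real" where
  "seq_value l D = (1 / real l) * (\<Sum>i<l. log (real l) (real (D i)))"

end

theory Submission
  imports Defs
begin

(*
  Among all kernels of dimension l pick one, g, that maximises first the product of
  its partial distances and, among those, the weighted sum \<Sum> j * D_j.  Swapping two adjacent
  input coordinates of a kernel can only improve this lexicographic potential when the
  partial distances are out of order, so the partial distances D_j of g are non-decreasing;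
  and since E(g) = (1/l) log_l (\<Prod> D_j), g attains E_l.  It remains to show that the
  partial-distance sequence of a kernel with non-decreasing partial distances is LP-valid:
  the bound D_i \<le> d(l, l-i) comes from the code g({0^i} x {0,1}^(l-i)), and the LP witness
  B^(k)_j is the normalised distance distribution of the pairs of distinct inputs sharing
  a prefix of length k.  Its Krawtchouk transform is bounded below by Delsarte's inequality,
  which we prove via the character expansion of the Krawtchouk polynomials.
*)

lemma finite_words: "finite (words n)"
proof -
  have "words n = {xs. set xs \<subseteq> (UNIV::bool set) \<and> length xs = n}" by (auto simp: words_def)
  thus ?thesis using finite_lists_length_eq[of "UNIV::bool set" n] by simp
qed

lemma card_words: "card (words n) = 2 ^ n"
proof -
  have "words n = {xs. set xs \<subseteq> (UNIV::bool set) \<and> length xs = n}" by (auto simp: words_def)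
  thus ?thesis using card_lists_length_eq[of "UNIV::bool set" n] by simp
qed

lemma hamming_sym: "length x = length y \<Longrightarrow> hamming x y = hamming y x"
  unfolding hamming_def by (metis (mono_tags, lifting))

lemma hamming_le_length: "hamming x y \<le> length x"
proof -
  have "{j. j < length x \<and> x ! j \<noteq> y ! j} \<subseteq> {..<length x}" by auto
  from card_mono[OF _ this] show ?thesis unfolding hamming_def by simp
qed

lemma hamming_self: "hamming x x = 0"
  unfolding hamming_def by simp

lemma hamming_pos: "length x = length y \<Longrightarrow> x \<noteq> y \<Longrightarrow> 0 < hamming x y"
proof -
  assume l: "length x = length y" and ne: "x \<noteq> y"
  then obtain j where "j < length x" "x ! j \<noteq> y ! j" using nth_equalityI by blast
  hence "{j. j < length x \<and> x ! j \<noteq> y ! j} \<noteq> {}" by auto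
  moreover have "finite {j. j < length x \<and> x ! j \<noteq> y ! j}" by auto
  ultimately show ?thesis unfolding hamming_def by (simp add: card_gt_0_iff)
qed

definition cylinder :: "nat \<Rightarrow> bool list \<Rightarrow> bool list set" where
  "cylinder n p = {x \<in> words n. take (length p) x = p}"

lemma finite_cylinder: "finite (cylinder n p)"
  unfolding cylinder_def using finite_words by auto

lemma card_cylinder:
  assumes "length p \<le> n"
  shows "card (cylinder n p) = 2 ^ (n - length p)"
proof -
  have "cylinder n p = (\<lambda>u. p @ u) ` words (n - length p)"
  proof
    show "cylinder n p \<subseteq> (\<lambda>u. p @ u) ` words (n - length p)"
    proof
      fix x assume "x \<in> cylinder n p"
      hence "x = p @ drop (length p) x" "drop (length p) x \<in> words (n - length p)"
        unfolding cylinder_def words_def by (auto, metis append_take_drop_id)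
      thus "x \<in> (\<lambda>u. p @ u) ` words (n - length p)" by blast
    qed
    show "(\<lambda>u. p @ u) ` words (n - length p) \<subseteq> cylinder n p"
      using assms unfolding cylinder_def words_def by auto
  qed
  moreover have "inj_on (\<lambda>u. p @ u) (words (n - length p))" by (auto simp: inj_on_def)
  ultimately show ?thesis by (simp add: card_image card_words)
qed

lemma first_difference:
  assumes a: "a \<in> words l" and b: "b \<in> words l" and agree: "\<forall>m<k. a ! m = b ! m" and ne: "a \<noteq> b"
  obtains j where "k \<le> j" "j < l" "\<forall>m<j. a ! m = b ! m" "a ! j \<noteq> b ! j"
proof -
  have la: "length a = l" and lb: "length b = l" using a b by (auto simp: words_def)
  have ex: "\<exists>m. m < l \<and> a ! m \<noteq> b ! m"
  proof (rule ccontr)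
    assume "\<not> (\<exists>m. m < l \<and> a ! m \<noteq> b ! m)"
    hence "a = b" using la lb by (intro nth_equalityI) auto
    thus False using ne by simp
  qed
  define j where "j = (LEAST m. m < l \<and> a ! m \<noteq> b ! m)"
  have j: "j < l \<and> a ! j \<noteq> b ! j" unfolding j_def using LeastI_ex[OF ex] .
  have below: "\<forall>m<j. a ! m = b ! m"
  proof (intro allI impI)
    fix m assume "m < j"
    hence "\<not> (m < l \<and> a ! m \<noteq> b ! m)" unfolding j_def using not_less_Least by blast
    thus "a ! m = b ! m" using \<open>m < j\<close> j by auto
  qed
  have "k \<le> j" using agree j by (meson not_le)
  thus thesis using that j below by blast
qed

section \<open>Krawtchouk polynomials and Delsarte's inequality\<close>

lemma card_split_subsets:
  assumes fN: "finite N" and DN: "\<Delta> \<subseteq> N" and mi: "m \<le> i"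
  shows "card {S. S \<subseteq> N \<and> card S = i \<and> card (S \<inter> \<Delta>) = m}
        = (card \<Delta> choose m) * (card (N - \<Delta>) choose (i - m))"
proof -
  have fD: "finite \<Delta>" using finite_subset[OF DN fN] .
  let ?A = "{T. T \<subseteq> \<Delta> \<and> card T = m}" and ?B = "{R. R \<subseteq> N - \<Delta> \<and> card R = i - m}"
  have eq: "{S. S \<subseteq> N \<and> card S = i \<and> card (S \<inter> \<Delta>) = m} = (\<lambda>(T,R). T \<union> R) ` (?A \<times> ?B)"
  proof
    show "{S. S \<subseteq> N \<and> card S = i \<and> card (S \<inter> \<Delta>) = m} \<subseteq> (\<lambda>(T,R). T \<union> R) ` (?A \<times> ?B)"
    proof
      fix S assume S: "S \<in> {S. S \<subseteq> N \<and> card S = i \<and> card (S \<inter> \<Delta>) = m}"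
      have fS: "finite S" using S finite_subset[of S N] fN by auto
      have "card S = card (S \<inter> \<Delta>) + card (S - \<Delta>)"
        using card_Int_Diff[OF fS, of \<Delta>] .
      hence "card (S - \<Delta>) = i - m" using S by auto
      hence "(S \<inter> \<Delta>, S - \<Delta>) \<in> ?A \<times> ?B" using S by auto
      moreover have "S = (S \<inter> \<Delta>) \<union> (S - \<Delta>)" by auto
      ultimately show "S \<in> (\<lambda>(T,R). T \<union> R) ` (?A \<times> ?B)"
        by (metis (no_types, lifting) case_prod_conv image_eqI)
    qed
    show "(\<lambda>(T,R). T \<union> R) ` (?A \<times> ?B) \<subseteq> {S. S \<subseteq> N \<and> card S = i \<and> card (S \<inter> \<Delta>) = m}"
    proof
      fix S assume "S \<in> (\<lambda>(T,R). T \<union> R) ` (?A \<times> ?B)"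
      then obtain T R where TR: "T \<in> ?A" "R \<in> ?B" "S = T \<union> R" by auto
      have fT: "finite T" using TR finite_subset[of T \<Delta>] fD by auto
      have fR: "finite R" using TR finite_subset[of R N] fN by auto
      have "card S = m + (i - m)" using TR card_Un_disjoint[OF fT fR] by auto
      moreover have "S \<inter> \<Delta> = T" using TR by auto
      ultimately show "S \<in> {S. S \<subseteq> N \<and> card S = i \<and> card (S \<inter> \<Delta>) = m}"
        using TR DN mi by auto
    qed
  qed
  have inj: "inj_on (\<lambda>(T,R). T \<union> R) (?A \<times> ?B)"
  proof (rule inj_onI)
    fix p q assume hp: "p \<in> ?A \<times> ?B" and hq: "q \<in> ?A \<times> ?B"
      and e: "(\<lambda>(T,R). T \<union> R) p = (\<lambda>(T,R). T \<union> R) q"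
    obtain T R T' R' where p: "p = (T,R)" and q: "q = (T',R')" by (cases p, cases q)
    have h: "T \<subseteq> \<Delta>" "R \<inter> \<Delta> = {}" "T' \<subseteq> \<Delta>" "R' \<inter> \<Delta> = {}" using hp hq p q by auto
    have "T \<union> R = T' \<union> R'" using e p q by simp
    hence "T = T'" "R = R'" using h by blast+
    thus "p = q" using p q by simp
  qed
  have "card (?A \<times> ?B) = (card \<Delta> choose m) * (card (N - \<Delta>) choose (i - m))"
    using n_subsets[OF fD] n_subsets[of "N - \<Delta>"] fN by (simp add: card_cartesian_product)
  thus ?thesis using eq card_image[OF inj] by simp
qed

definition character :: "nat set \<Rightarrow> bool list \<Rightarrow> real" where
  "character S u = (-1) ^ card {j\<in>S. u ! j}"

lemma character_mult:
  assumes fS: "finite S"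
  shows "character S u * character S v = (-1) ^ card {j\<in>S. u ! j \<noteq> v ! j}"
proof -
  let ?A1 = "{j\<in>S. u ! j \<and> v ! j}" and ?A2 = "{j\<in>S. u ! j \<and> \<not> v ! j}"
    and ?A3 = "{j\<in>S. \<not> u ! j \<and> v ! j}"
  have f: "finite ?A1" "finite ?A2" "finite ?A3" using fS by auto
  have "{j\<in>S. u ! j} = ?A1 \<union> ?A2" by auto
  hence c1: "card {j\<in>S. u ! j} = card ?A1 + card ?A2"
    using f by (simp add: card_Un_disjoint disjoint_iff)
  have "{j\<in>S. v ! j} = ?A1 \<union> ?A3" by auto
  hence c2: "card {j\<in>S. v ! j} = card ?A1 + card ?A3"
    using f by (simp add: card_Un_disjoint disjoint_iff)
  have "{j\<in>S. u ! j \<noteq> v ! j} = ?A2 \<union> ?A3" by auto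
  hence c3: "card {j\<in>S. u ! j \<noteq> v ! j} = card ?A2 + card ?A3"
    using f by (simp add: card_Un_disjoint disjoint_iff)
  have "character S u * character S v = (-1::real) ^ (2 * card ?A1) * (-1) ^ (card ?A2 + card ?A3)"
    unfolding character_def c1 c2 by (simp add: power_add algebra_simps)
  also have "\<dots> = (-1) ^ (card ?A2 + card ?A3)" by (simp add: power_mult)
  finally show ?thesis using c3 by simp
qed

definition subsets_of_size :: "nat \<Rightarrow> nat \<Rightarrow> nat set set" where
  "subsets_of_size n i = {S. S \<subseteq> {..<n} \<and> card S = i}"

lemma finite_subsets_of_size: "finite (subsets_of_size n i)"
  unfolding subsets_of_size_def by auto

lemma kraw_character_sum:
  assumes u: "length u = n" and v: "length v = n"
  shows "kraw n i (hamming u v) = (\<Sum>S\<in>subsets_of_size n i. character S u * character S v)"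
proof -
  let ?D = "{j. j < n \<and> u ! j \<noteq> v ! j}" and ?F = "subsets_of_size n i"
  have hD: "hamming u v = card ?D" unfolding hamming_def using u by simp
  have DN: "?D \<subseteq> {..<n}" by auto
  have cND: "card ({..<n} - ?D) = n - card ?D"
    using DN by (simp add: card_Diff_subset)
  have "(\<Sum>S\<in>?F. character S u * character S v) = (\<Sum>S\<in>?F. (-1::real) ^ card (S \<inter> ?D))"
  proof (rule sum.cong[OF refl])
    fix S assume "S \<in> ?F"
    hence Sn: "S \<subseteq> {..<n}" and fS: "finite S"
      unfolding subsets_of_size_def using finite_subset by auto
    have "{j\<in>S. u ! j \<noteq> v ! j} = S \<inter> ?D" using Sn by auto
    thus "character S u * character S v = (-1) ^ card (S \<inter> ?D)" using character_mult[OF fS] by simp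
  qed
  also have "\<dots> = (\<Sum>m\<le>i. (\<Sum>S\<in>{S\<in>?F. card (S \<inter> ?D) = m}. (-1::real) ^ card (S \<inter> ?D)))"
  proof (rule sum.group[symmetric])
    show "(\<lambda>S. card (S \<inter> ?D)) ` ?F \<subseteq> {..i}"
    proof
      fix x assume "x \<in> (\<lambda>S. card (S \<inter> ?D)) ` ?F"
      then obtain S where S: "S \<in> ?F" "x = card (S \<inter> ?D)" by auto
      hence "finite S" "card S = i" unfolding subsets_of_size_def using finite_subset by auto
      thus "x \<in> {..i}" using S card_mono[of S "S \<inter> ?D"] by auto
    qed
  qed (simp_all add: finite_subsets_of_size)
  also have "\<dots> = (\<Sum>m\<le>i. (-1) ^ m * real (card {S\<in>?F. card (S \<inter> ?D) = m}))"
    by (rule sum.cong[OF refl]) simp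
  also have "\<dots> = (\<Sum>m\<le>i. (-1) ^ m * real (card ?D choose m) * real ((n - card ?D) choose (i - m)))"
  proof (rule sum.cong[OF refl])
    fix m assume "m \<in> {..i}"
    hence "card {S. S \<subseteq> {..<n} \<and> card S = i \<and> card (S \<inter> ?D) = m}
        = (card ?D choose m) * ((n - card ?D) choose (i - m))"
      using card_split_subsets[OF finite_lessThan DN, of m i] cND by simp
    moreover have "{S\<in>?F. card (S \<inter> ?D) = m} = {S. S \<subseteq> {..<n} \<and> card S = i \<and> card (S \<inter> ?D) = m}"
      unfolding subsets_of_size_def by auto
    ultimately show "(-1) ^ m * real (card {S\<in>?F. card (S \<inter> ?D) = m})
        = (-1) ^ m * real (card ?D choose m) * real ((n - card ?D) choose (i - m))"
      by simp
  qed
  finally show ?thesis unfolding kraw_def hD by simp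
qed

text \<open>P_i(0) = binom(l,i): the contribution of a word paired with itself.\<close>
lemma kraw_at_zero: "kraw l i 0 = real (l choose i)"
proof -
  have "kraw l i 0 = (\<Sum>m\<le>i. (if m = 0 then real (l choose i) else 0))"
    unfolding kraw_def by (rule sum.cong[OF refl]) auto
  thus ?thesis by simp
qed

text \<open>Delsarte's inequality: for any finite family of words of length n, the double sum of
  P_i over all pairwise distances is a sum of squares, hence non-negative.\<close>
lemma delsarte_nonneg:
  assumes fA: "finite A" and h: "\<And>a. a \<in> A \<Longrightarrow> length (h a) = n"
  shows "0 \<le> (\<Sum>a\<in>A. \<Sum>b\<in>A. kraw n i (hamming (h a) (h b)))"
proof -
  let ?F = "subsets_of_size n i"
  have "(\<Sum>a\<in>A. \<Sum>b\<in>A. kraw n i (hamming (h a) (h b)))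
      = (\<Sum>a\<in>A. \<Sum>b\<in>A. \<Sum>S\<in>?F. character S (h a) * character S (h b))"
    using kraw_character_sum h by simp
  also have "\<dots> = (\<Sum>S\<in>?F. \<Sum>a\<in>A. \<Sum>b\<in>A. character S (h a) * character S (h b))"
  proof -
    have "(\<Sum>a\<in>A. \<Sum>b\<in>A. \<Sum>S\<in>?F. character S (h a) * character S (h b))
        = (\<Sum>a\<in>A. \<Sum>S\<in>?F. \<Sum>b\<in>A. character S (h a) * character S (h b))"
      by (rule sum.cong[OF refl], rule sum.swap)
    also have "\<dots> = (\<Sum>S\<in>?F. \<Sum>a\<in>A. \<Sum>b\<in>A. character S (h a) * character S (h b))"
      by (rule sum.swap)
    finally show ?thesis .
  qed
  also have "\<dots> = (\<Sum>S\<in>?F. (\<Sum>a\<in>A. character S (h a)) * (\<Sum>b\<in>A. character S (h b)))"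
    by (simp add: sum_product)
  also have "\<dots> \<ge> 0" by (intro sum_nonneg) simp
  finally show ?thesis .
qed

definition pd_values :: "nat \<Rightarrow> (bool list \<Rightarrow> bool list) \<Rightarrow> nat \<Rightarrow> nat set" where
  "pd_values l g i = {hamming (g (w @ [False] @ u)) (g (w @ [True] @ v)) | w u v.
      w \<in> words i \<and> u \<in> words (l - i - 1) \<and> v \<in> words (l - i - 1)}"

lemma partial_dist_Min: "partial_dist l g i = Min (pd_values l g i)"
  unfolding partial_dist_def pd_values_def by simp

text \<open>Most facts about partial distances only need that g maps {0,1}^l into itself.\<close>
definition maps_words :: "nat \<Rightarrow> (bool list \<Rightarrow> bool list) \<Rightarrow> bool" where
  "maps_words l g \<longleftrightarrow> (\<forall>x\<in>words l. g x \<in> words l)"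

lemma kernel_maps_words: "is_kernel l g \<Longrightarrow> maps_words l g"
  unfolding is_kernel_def maps_words_def bij_betw_def by auto

lemma kernel_inj: "is_kernel l g \<Longrightarrow> inj_on g (words l)"
  unfolding is_kernel_def bij_betw_def by auto

lemma kernel_id: "is_kernel l id"
  unfolding is_kernel_def by simp

lemma pd_values_iff:
  assumes j: "j < l"
  shows "z \<in> pd_values l g j \<longleftrightarrow> (\<exists>x y. x \<in> words l \<and> y \<in> words l \<and> (\<forall>m<j. x ! m = y ! m)
     \<and> \<not> x ! j \<and> y ! j \<and> z = hamming (g x) (g y))"
proof
  assume "z \<in> pd_values l g j"
  then obtain w u v where z: "z = hamming (g (w @ [False] @ u)) (g (w @ [True] @ v))"
    and h: "w \<in> words j" "u \<in> words (l - j - 1)" "v \<in> words (l - j - 1)"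
    by (auto simp: pd_values_def)
  have lw: "length w = j" using h by (simp add: words_def)
  have "w @ [False] @ u \<in> words l" "w @ [True] @ v \<in> words l" using h j by (auto simp: words_def)
  moreover have "\<forall>m<j. (w @ [False] @ u) ! m = (w @ [True] @ v) ! m" using lw by (auto simp: nth_append)
  moreover have "\<not> (w @ [False] @ u) ! j" "(w @ [True] @ v) ! j" using lw by auto
  ultimately show "\<exists>x y. x \<in> words l \<and> y \<in> words l \<and> (\<forall>m<j. x ! m = y ! m)
     \<and> \<not> x ! j \<and> y ! j \<and> z = hamming (g x) (g y)" using z by blast
next
  assume "\<exists>x y. x \<in> words l \<and> y \<in> words l \<and> (\<forall>m<j. x ! m = y ! m)
     \<and> \<not> x ! j \<and> y ! j \<and> z = hamming (g x) (g y)"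
  then obtain x y where x: "x \<in> words l" and y: "y \<in> words l" and agree: "\<forall>m<j. x ! m = y ! m"
    and xj: "\<not> x ! j" and yj: "y ! j" and z: "z = hamming (g x) (g y)" by blast
  have lx: "length x = l" and ly: "length y = l" using x y by (auto simp: words_def)
  have tk: "take j x = take j y" using agree lx ly j by (intro nth_equalityI) auto
  have ex: "x = take j x @ [False] @ drop (Suc j) x" using id_take_nth_drop[of j x] lx j xj by simp
  have ey: "y = take j x @ [True] @ drop (Suc j) y" using id_take_nth_drop[of j y] ly j yj tk by simp
  have "take j x \<in> words j" "drop (Suc j) x \<in> words (l - j - 1)" "drop (Suc j) y \<in> words (l - j - 1)"
    using lx ly j by (auto simp: words_def)
  moreover have "z = hamming (g (take j x @ [False] @ drop (Suc j) x)) (g (take j x @ [True] @ drop (Suc j) y))"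
    using z ex ey by metis
  ultimately show "z \<in> pd_values l g j" unfolding pd_values_def by blast
qed

lemma pd_values_bounded:
  assumes m: "maps_words l g" and i: "i < l"
  shows "pd_values l g i \<subseteq> {..l}"
proof
  fix z assume "z \<in> pd_values l g i"
  then obtain x y where "x \<in> words l" and z: "z = hamming (g x) (g y)"
    unfolding pd_values_iff[OF i] by blast
  hence "length (g x) = l" using m unfolding maps_words_def words_def by auto
  thus "z \<in> {..l}" using z hamming_le_length[of "g x" "g y"] by simp
qed

lemma pd_values_nonempty:
  assumes "i < l"
  shows "pd_values l g i \<noteq> {}"
proof -
  let ?w = "replicate i False" and ?u = "replicate (l - i - 1) False"
  have "hamming (g (?w @ [False] @ ?u)) (g (?w @ [True] @ ?u)) \<in> pd_values l g i"
    unfolding pd_values_def words_def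
    by (rule CollectI, rule exI[of _ ?w], rule exI[of _ ?u], rule exI[of _ ?u]) simp
  thus ?thesis by blast
qed

lemma partial_dist_in_pd_values:
  assumes "maps_words l g" "i < l"
  shows "partial_dist l g i \<in> pd_values l g i"
  using Min_in[OF finite_subset[OF pd_values_bounded[OF assms] finite_atMost] pd_values_nonempty[OF assms(2)]]
  unfolding partial_dist_Min .

lemma partial_dist_le_length:
  assumes "maps_words l g" "i < l"
  shows "partial_dist l g i \<le> l"
  using partial_dist_in_pd_values[OF assms] pd_values_bounded[OF assms] by auto

text \<open>Partial distances of a kernel are positive, because a kernel is injective.\<close>
lemma partial_dist_pos:
  assumes k: "is_kernel l g" and i: "i < l"
  shows "0 < partial_dist l g i"
proof -
  obtain x y where x: "x \<in> words l" and y: "y \<in> words l" and xy: "\<not> x ! i" "y ! i"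
    and d: "partial_dist l g i = hamming (g x) (g y)"
    using partial_dist_in_pd_values[OF kernel_maps_words[OF k] i] unfolding pd_values_iff[OF i] by blast
  have "g x \<noteq> g y" using kernel_inj[OF k] x y xy by (metis inj_on_def)
  moreover have "length (g x) = length (g y)"
    using kernel_maps_words[OF k] x y unfolding maps_words_def words_def by auto
  ultimately show ?thesis using d hamming_pos by auto
qed

lemma partial_dist_geI:
  assumes m: "maps_words l h" and j: "j < l"
    and H: "\<And>x y. x \<in> words l \<Longrightarrow> y \<in> words l \<Longrightarrow> \<forall>m<j. x ! m = y ! m
      \<Longrightarrow> \<not> x ! j \<Longrightarrow> y ! j \<Longrightarrow> c \<le> hamming (h x) (h y)"
  shows "c \<le> partial_dist l h j"
proof -
  obtain x y where "x \<in> words l" "y \<in> words l" "\<forall>m<j. x ! m = y ! m" "\<not> x ! j" "y ! j"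
    and "partial_dist l h j = hamming (h x) (h y)"
    using partial_dist_in_pd_values[OF m j] unfolding pd_values_iff[OF j] by blast
  thus ?thesis using H by simp
qed

lemma partial_dist_le_first_difference:
  assumes m: "maps_words l g" and j: "j < l" and a: "a \<in> words l" and b: "b \<in> words l"
    and agree: "\<forall>k<j. a ! k = b ! k" and aj: "a ! j \<noteq> b ! j"
  shows "partial_dist l g j \<le> hamming (g a) (g b)"
proof -
  have fin: "finite (pd_values l g j)"
    using finite_subset[OF pd_values_bounded[OF m j] finite_atMost] .
  have sym: "hamming (g a) (g b) = hamming (g b) (g a)"
    using m a b hamming_sym unfolding maps_words_def words_def by auto
  have "hamming (g a) (g b) \<in> pd_values l g j"
  proof (cases "a ! j")
    case True
    hence "\<not> b ! j" "a ! j" using aj by auto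
    moreover have "\<forall>k<j. b ! k = a ! k" using agree by simp
    ultimately show ?thesis using a b sym unfolding pd_values_iff[OF j] by blast
  next
    case False
    hence "\<not> a ! j" "b ! j" using aj by auto
    thus ?thesis using a b agree unfolding pd_values_iff[OF j] by blast
  qed
  thus ?thesis unfolding partial_dist_Min using Min_le[OF fin] by blast
qed

definition nondecreasing_below :: "nat \<Rightarrow> (nat \<Rightarrow> nat) \<Rightarrow> bool" where
  "nondecreasing_below l D \<longleftrightarrow> (\<forall>i j. i \<le> j \<and> j < l \<longrightarrow> D i \<le> D j)"

lemma nondecreasing_belowI:
  assumes "\<And>i. Suc i < l \<Longrightarrow> D i \<le> D (Suc i)"
  shows "nondecreasing_below l D"
  unfolding nondecreasing_below_def
proof (intro allI impI, elim conjE)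
  fix i j assume "i \<le> j" "j < l"
  thus "D i \<le> D j"
  proof (induction j rule: dec_induct)
    case (step n)
    thus ?case using assms[of n] by simp
  qed simp
qed

lemma partial_dist_le_common_prefix:
  assumes m: "maps_words l g" and mono: "nondecreasing_below l (partial_dist l g)" and k: "k < l"
    and a: "a \<in> words l" and b: "b \<in> words l" and agree: "\<forall>m<k. a ! m = b ! m" and ne: "a \<noteq> b"
  shows "partial_dist l g k \<le> hamming (g a) (g b)"
proof -
  obtain j where j: "k \<le> j" "j < l" "\<forall>m<j. a ! m = b ! m" "a ! j \<noteq> b ! j"
    using first_difference[OF a b agree ne] .
  have "partial_dist l g k \<le> partial_dist l g j"
    using mono j unfolding nondecreasing_below_def by blast
  also have "\<dots> \<le> hamming (g a) (g b)" using partial_dist_le_first_difference[OF m j(2) a b j(3,4)] .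
  finally show ?thesis .
qed

section \<open>Swapping adjacent coordinates\<close>

definition adj_transp :: "nat \<Rightarrow> nat \<Rightarrow> nat" where
  "adj_transp i m = (if m = i then Suc i else if m = Suc i then i else m)"

definition swap_coords :: "nat \<Rightarrow> bool list \<Rightarrow> bool list" where
  "swap_coords i x = (if Suc i < length x then map (\<lambda>m. x ! adj_transp i m) [0..<length x] else x)"

lemma adj_transp_less: "Suc i < n \<Longrightarrow> m < n \<Longrightarrow> adj_transp i m < n"
  unfolding adj_transp_def by auto

lemma adj_transp_involution: "adj_transp i (adj_transp i m) = m"
  unfolding adj_transp_def by auto

lemma length_swap_coords [simp]: "length (swap_coords i x) = length x"
  unfolding swap_coords_def by auto

lemma nth_swap_coords: "Suc i < length x \<Longrightarrow> m < length x \<Longrightarrow> swap_coords i x ! m = x ! adj_transp i m"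
  unfolding swap_coords_def by auto

lemma swap_coords_involution [simp]: "swap_coords i (swap_coords i x) = x"
proof (cases "Suc i < length x")
  case True
  show ?thesis
  proof (rule nth_equalityI)
    fix m assume "m < length (swap_coords i (swap_coords i x))"
    hence m: "m < length x" by simp
    have "swap_coords i (swap_coords i x) ! m = swap_coords i x ! adj_transp i m"
      using nth_swap_coords[of i "swap_coords i x" m] True m by simp
    also have "\<dots> = x ! m"
      using nth_swap_coords[OF True adj_transp_less[OF True m]] adj_transp_involution by simp
    finally show "swap_coords i (swap_coords i x) ! m = x ! m" .
  qed simp
next
  case False thus ?thesis unfolding swap_coords_def by simp
qed

lemma swap_coords_words: "x \<in> words l \<Longrightarrow> swap_coords i x \<in> words l"
  unfolding words_def by simp

lemma kernel_swap: "is_kernel l g \<Longrightarrow> is_kernel l (g \<circ> swap_coords i)"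
proof -
  assume "is_kernel l g"
  moreover have "bij_betw (swap_coords i) (words l) (words l)"
    by (rule bij_betw_byWitness[where f'="swap_coords i"]) (auto simp: swap_coords_words)
  ultimately show ?thesis unfolding is_kernel_def using bij_betw_trans by blast
qed

lemma maps_words_swap: "maps_words l g \<Longrightarrow> maps_words l (g \<circ> swap_coords i)"
  unfolding maps_words_def using swap_coords_words by auto

lemma partial_dist_swap_other:
  assumes m: "maps_words l g" and i: "Suc i < l" and j: "j < l" "j \<noteq> i" "j \<noteq> Suc i"
  shows "partial_dist l g j \<le> partial_dist l (g \<circ> swap_coords i) j"
proof (rule partial_dist_geI[OF maps_words_swap[OF m] j(1)])
  fix x y assume x: "x \<in> words l" and y: "y \<in> words l" and agree: "\<forall>m<j. x ! m = y ! m"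
    and xj: "\<not> x ! j" and yj: "y ! j"
  have lx: "length x = l" and ly: "length y = l" using x y by (auto simp: words_def)
  have agree': "\<forall>m<j. swap_coords i x ! m = swap_coords i y ! m"
  proof (intro allI impI)
    fix m assume "m < j"
    hence "adj_transp i m < j" using j unfolding adj_transp_def by auto
    thus "swap_coords i x ! m = swap_coords i y ! m"
      using nth_swap_coords lx ly i j \<open>m < j\<close> agree by auto
  qed
  have "swap_coords i x ! j = x ! j" "swap_coords i y ! j = y ! j"
    using nth_swap_coords lx ly i j unfolding adj_transp_def by auto
  hence "swap_coords i x ! j \<noteq> swap_coords i y ! j" using xj yj by auto
  from partial_dist_le_first_difference[OF m j(1) swap_coords_words[OF x] swap_coords_words[OF y] agree' this]
  show "partial_dist l g j \<le> hamming ((g \<circ> swap_coords i) x) ((g \<circ> swap_coords i) y)" by simp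
qed

lemma partial_dist_swap_at:
  assumes m: "maps_words l g" and i: "Suc i < l"
  shows "min (partial_dist l g i) (partial_dist l g (Suc i)) \<le> partial_dist l (g \<circ> swap_coords i) i"
proof (rule partial_dist_geI[OF maps_words_swap[OF m]])
  show "i < l" using i by simp
  fix x y assume x: "x \<in> words l" and y: "y \<in> words l" and agree: "\<forall>m<i. x ! m = y ! m"
    and xi: "\<not> x ! i" and yi: "y ! i"
  have lx: "length x = l" and ly: "length y = l" using x y by (auto simp: words_def)
  let ?x = "swap_coords i x" and ?y = "swap_coords i y"
  have agree': "\<forall>m<i. ?x ! m = ?y ! m"
    using nth_swap_coords lx ly i agree unfolding adj_transp_def by auto
  show "min (partial_dist l g i) (partial_dist l g (Suc i)) \<le> hamming ((g \<circ> swap_coords i) x) ((g \<circ> swap_coords i) y)"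
  proof (cases "?x ! i = ?y ! i")
    case False
    from partial_dist_le_first_difference[OF m _ swap_coords_words[OF x] swap_coords_words[OF y] agree' False] i
    show ?thesis by simp
  next
    case True
    have agree2: "\<forall>m<Suc i. ?x ! m = ?y ! m" using agree' True less_Suc_eq by auto
    have "?x ! Suc i = x ! i" "?y ! Suc i = y ! i"
      using nth_swap_coords lx ly i unfolding adj_transp_def by auto
    hence "?x ! Suc i \<noteq> ?y ! Suc i" using xi yi by auto
    from partial_dist_le_first_difference[OF m i swap_coords_words[OF x] swap_coords_words[OF y] agree2 this]
    show ?thesis by simp
  qed
qed

lemma partial_dist_swap_next:
  assumes m: "maps_words l g" and i: "Suc i < l"
  shows "partial_dist l g i \<le> partial_dist l (g \<circ> swap_coords i) (Suc i)"
proof (rule partial_dist_geI[OF maps_words_swap[OF m] i])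
  fix x y assume x: "x \<in> words l" and y: "y \<in> words l" and agree: "\<forall>m<Suc i. x ! m = y ! m"
    and xi: "\<not> x ! Suc i" and yi: "y ! Suc i"
  have lx: "length x = l" and ly: "length y = l" using x y by (auto simp: words_def)
  have agree': "\<forall>m<i. swap_coords i x ! m = swap_coords i y ! m"
    using nth_swap_coords lx ly i agree unfolding adj_transp_def by auto
  have "swap_coords i x ! i = x ! Suc i" "swap_coords i y ! i = y ! Suc i"
    using nth_swap_coords lx ly i unfolding adj_transp_def by auto
  hence "swap_coords i x ! i \<noteq> swap_coords i y ! i" using xi yi by auto
  from partial_dist_le_first_difference[OF m _ swap_coords_words[OF x] swap_coords_words[OF y] agree' this] i
  show "partial_dist l g i \<le> hamming ((g \<circ> swap_coords i) x) ((g \<circ> swap_coords i) y)" by simp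
qed

text \<open>Kernels are compared lexicographically: first by the product of their partial distances
  (which determines the exponent), then by the weighted sum \<Sum> j * D_j.  Since the weighted sum
  of a sequence with values in {0..l} is at most l^3, the single number below encodes this order.\<close>
definition seq_prod :: "nat \<Rightarrow> (nat \<Rightarrow> nat) \<Rightarrow> nat" where
  "seq_prod l D = (\<Prod>j<l. D j)"

definition seq_weight :: "nat \<Rightarrow> (nat \<Rightarrow> nat) \<Rightarrow> nat" where
  "seq_weight l D = (\<Sum>j<l. j * D j)"

definition potential :: "nat \<Rightarrow> (nat \<Rightarrow> nat) \<Rightarrow> nat" where
  "potential l D = (l*l*l + 1) * seq_prod l D + seq_weight l D"

lemma seq_weight_bound:
  assumes "\<forall>j<l. D j \<le> l"
  shows "seq_weight l D \<le> l*l*l"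
proof -
  have "seq_weight l D \<le> (\<Sum>j<l. l * l)"
    unfolding seq_weight_def by (rule sum_mono) (use assms in \<open>auto intro: mult_le_mono\<close>)
  thus ?thesis by simp
qed

lemma seq_prod_bound:
  assumes "\<forall>j<l. D j \<le> l"
  shows "seq_prod l D \<le> l ^ l"
proof -
  have "seq_prod l D \<le> (\<Prod>j<l. l)"
    unfolding seq_prod_def by (rule prod_mono) (use assms in auto)
  thus ?thesis by simp
qed

lemma seq_prod_le_of_potential_le:
  assumes bound: "\<forall>j<l. D j \<le> l" and le: "potential l D' \<le> potential l D"
  shows "seq_prod l D' \<le> seq_prod l D"
proof (rule ccontr)
  assume "\<not> ?thesis"
  hence "seq_prod l D + 1 \<le> seq_prod l D'" by simp
  hence "(l*l*l+1) * (seq_prod l D + 1) \<le> (l*l*l+1) * seq_prod l D'" by (rule mult_left_mono) simp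
  hence "potential l D < potential l D'"
    unfolding potential_def using seq_weight_bound[OF bound] by (simp add: algebra_simps)
  thus False using le by simp
qed

lemma prod_split_adjacent:
  fixes f :: "nat \<Rightarrow> 'a::comm_monoid_mult"
  assumes "Suc i < l"
  shows "(\<Prod>j<l. f j) = f i * f (Suc i) * (\<Prod>j\<in>{..<l} - {i, Suc i}. f j)"
proof -
  have "{..<l} = insert i (insert (Suc i) ({..<l} - {i, Suc i}))" using assms by auto
  hence "(\<Prod>j<l. f j) = (\<Prod>j\<in>insert i (insert (Suc i) ({..<l} - {i, Suc i})). f j)"
    by (rule arg_cong)
  thus ?thesis by (simp add: mult.assoc)
qed

lemma sum_split_adjacent:
  fixes f :: "nat \<Rightarrow> 'a::comm_monoid_add"
  assumes "Suc i < l"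
  shows "(\<Sum>j<l. f j) = f i + f (Suc i) + (\<Sum>j\<in>{..<l} - {i, Suc i}. f j)"
proof -
  have "{..<l} = insert i (insert (Suc i) ({..<l} - {i, Suc i}))" using assms by auto
  hence "(\<Sum>j<l. f j) = (\<Sum>j\<in>insert i (insert (Suc i) ({..<l} - {i, Suc i})). f j)"
    by (rule arg_cong)
  thus ?thesis by (simp add: add.assoc)
qed

text \<open>Arithmetic core of the swap argument: if D_(i+1) < D_i and D' arises from D by a change
  at positions i, i+1 with D'_i \<ge> D_(i+1) and D'_(i+1) \<ge> D_i, then the potential strictly grows:
  either the product grows, or D' is D with the two entries exchanged and the weight grows.\<close>
lemma potential_swap_less:
  assumes i: "Suc i < l" and pos: "\<forall>j<l. 0 < D j" and bound: "\<forall>j<l. D j \<le> l"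
    and other: "\<forall>j\<in>{..<l} - {i, Suc i}. D' j = D j"
    and lt: "D (Suc i) < D i" and at: "D (Suc i) \<le> D' i" and above: "D i \<le> D' (Suc i)"
  shows "potential l D < potential l D'"
proof -
  define R where "R = (\<Prod>j\<in>{..<l} - {i, Suc i}. D j)"
  have "0 < R" unfolding R_def using pos by (intro prod_pos) auto
  have P: "seq_prod l D = D i * D (Suc i) * R"
    unfolding seq_prod_def R_def using prod_split_adjacent[OF i] .
  have P': "seq_prod l D' = D' i * D' (Suc i) * R"
    unfolding seq_prod_def R_def using prod_split_adjacent[OF i, of D'] other by simp
  show ?thesis
  proof (cases "D' i * D' (Suc i) \<le> D (Suc i) * D i")
    case True
    have "D (Suc i) * D i \<le> D' i * D i" "D' i * D i \<le> D' i * D' (Suc i)" using at above by simp_all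
    hence "D' i * D i = D' i * D' (Suc i)" "D (Suc i) * D i = D' i * D i" using True by linarith+
    moreover have "0 < D' i" "0 < D i" using at pos i by auto
    ultimately have swapped: "D' i = D (Suc i)" "D' (Suc i) = D i" by auto
    define T where "T = (\<Sum>j\<in>{..<l} - {i, Suc i}. j * D j)"
    have "seq_weight l D = i * D i + Suc i * D (Suc i) + T"
      unfolding seq_weight_def T_def using sum_split_adjacent[OF i] .
    moreover have "seq_weight l D' = i * D (Suc i) + Suc i * D i + T"
      unfolding seq_weight_def T_def using sum_split_adjacent[OF i, of "\<lambda>j. j * D' j"] other swapped
      by simp
    ultimately have "seq_weight l D < seq_weight l D'" using lt by simp
    thus ?thesis unfolding potential_def using P P' swapped by simp
  next
    case False
    hence "(D (Suc i) * D i + 1) * R \<le> D' i * D' (Suc i) * R" by (intro mult_right_mono) simp_all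
    hence "seq_prod l D + 1 \<le> seq_prod l D'" using P P' \<open>0 < R\<close> by (simp add: algebra_simps)
    hence "(l*l*l+1) * (seq_prod l D + 1) \<le> (l*l*l+1) * seq_prod l D'" by (rule mult_left_mono) simp
    thus ?thesis unfolding potential_def using seq_weight_bound[OF bound] by (simp add: algebra_simps)
  qed
qed

lemma kernel_partial_dist_range:
  assumes "is_kernel l g"
  shows "\<forall>j<l. 0 < partial_dist l g j \<and> partial_dist l g j \<le> l"
  using partial_dist_pos[OF assms] partial_dist_le_length[OF kernel_maps_words[OF assms]] by blast

definition potential_maximiser :: "nat \<Rightarrow> (bool list \<Rightarrow> bool list) \<Rightarrow> bool" where
  "potential_maximiser l g \<longleftrightarrow> is_kernel l g \<and>
     (\<forall>h. is_kernel l h \<longrightarrow> potential l (partial_dist l h) \<le> potential l (partial_dist l g))"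

lemma potential_maximiser_exists: "\<exists>g. potential_maximiser l g"
proof -
  have "\<forall>g. is_kernel l g \<longrightarrow> potential l (partial_dist l g) < (l*l*l+1) * l ^ l + l*l*l + 1"
  proof (intro allI impI)
    fix g assume "is_kernel l g"
    hence "\<forall>j<l. partial_dist l g j \<le> l" using kernel_partial_dist_range by blast
    hence "potential l (partial_dist l g) \<le> (l*l*l+1) * l ^ l + l*l*l"
      unfolding potential_def by (intro add_mono mult_le_mono2 seq_prod_bound seq_weight_bound)
    thus "potential l (partial_dist l g) < (l*l*l+1) * l ^ l + l*l*l + 1" by simp
  qed
  from ex_has_greatest_nat[OF kernel_id this] show ?thesis unfolding potential_maximiser_def .
qed

text \<open>A potential maximiser has non-decreasing partial distances: otherwise swapping the
  offending adjacent coordinates would increase the potential.\<close>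
lemma potential_maximiser_nondecreasing:
  assumes max: "potential_maximiser l g"
  shows "nondecreasing_below l (partial_dist l g)"
proof (rule nondecreasing_belowI, rule ccontr)
  fix i assume i: "Suc i < l" and "\<not> partial_dist l g i \<le> partial_dist l g (Suc i)"
  hence lt: "partial_dist l g (Suc i) < partial_dist l g i" by simp
  have g: "is_kernel l g" using max unfolding potential_maximiser_def by blast
  define g' where "g' = g \<circ> swap_coords i"
  have g': "is_kernel l g'" unfolding g'_def using kernel_swap[OF g] .
  have m: "maps_words l g" and m': "maps_words l g'" using kernel_maps_words g g' by auto
  have swap_back: "g' \<circ> swap_coords i = g" unfolding g'_def by (rule ext) simp
  have other: "\<forall>j\<in>{..<l} - {i, Suc i}. partial_dist l g' j = partial_dist l g j"
  proof
    fix j assume "j \<in> {..<l} - {i, Suc i}"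
    hence j: "j < l" "j \<noteq> i" "j \<noteq> Suc i" by auto
    show "partial_dist l g' j = partial_dist l g j"
      using partial_dist_swap_other[OF m i j] partial_dist_swap_other[OF m' i j] swap_back
      unfolding g'_def by simp
  qed
  have "potential l (partial_dist l g) < potential l (partial_dist l g')"
  proof (rule potential_swap_less[OF i _ _ other lt])
    show "partial_dist l g (Suc i) \<le> partial_dist l g' i"
      using partial_dist_swap_at[OF m i] lt unfolding g'_def by simp
    show "partial_dist l g i \<le> partial_dist l g' (Suc i)"
      using partial_dist_swap_next[OF m i] unfolding g'_def .
  qed (use kernel_partial_dist_range[OF g] in blast)+
  thus False using max g' unfolding potential_maximiser_def by (meson not_le)
qed

lemma potential_maximiser_prod:
  assumes "potential_maximiser l g" and "is_kernel l h"
  shows "seq_prod l (partial_dist l h) \<le> seq_prod l (partial_dist l g)"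
  using assms seq_prod_le_of_potential_le kernel_partial_dist_range
  unfolding potential_maximiser_def by blast

section \<open>The LP witness: distance distributions of prefix classes\<close>

definition prefix_pairs :: "nat \<Rightarrow> nat \<Rightarrow> (bool list \<times> bool list) set" where
  "prefix_pairs l k = {p. fst p \<in> words l \<and> snd p \<in> words l \<and> take k (snd p) = take k (fst p)}"

definition distinct_prefix_pairs :: "nat \<Rightarrow> nat \<Rightarrow> (bool list \<times> bool list) set" where
  "distinct_prefix_pairs l k = {p \<in> prefix_pairs l k. fst p \<noteq> snd p}"

definition diagonal :: "nat \<Rightarrow> (bool list \<times> bool list) set" where
  "diagonal l = (\<lambda>x. (x,x)) ` words l"

lemma prefix_pairs_Sigma: "k \<le> l \<Longrightarrow> prefix_pairs l k = Sigma (words l) (\<lambda>x. cylinder l (take k x))"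
  unfolding prefix_pairs_def cylinder_def words_def by (auto simp: min_def split: if_splits)

lemma finite_prefix_pairs: "finite (prefix_pairs l k)"
proof -
  have "prefix_pairs l k \<subseteq> words l \<times> words l" unfolding prefix_pairs_def by auto
  thus ?thesis using finite_words finite_subset by blast
qed

lemma finite_distinct_prefix_pairs: "finite (distinct_prefix_pairs l k)"
  unfolding distinct_prefix_pairs_def using finite_prefix_pairs by auto

lemma diagonal_subset: "diagonal l \<subseteq> prefix_pairs l k"
  unfolding diagonal_def prefix_pairs_def by auto

lemma distinct_prefix_pairs_eq: "distinct_prefix_pairs l k = prefix_pairs l k - diagonal l"
  unfolding distinct_prefix_pairs_def diagonal_def prefix_pairs_def by auto

lemma card_distinct_prefix_pairs:
  assumes "k \<le> l"
  shows "card (distinct_prefix_pairs l k) = 2 ^ l * 2 ^ (l - k) - 2 ^ l"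
proof -
  have "card (prefix_pairs l k) = (\<Sum>x\<in>words l. card (cylinder l (take k x)))"
    unfolding prefix_pairs_Sigma[OF assms] using finite_words finite_cylinder by (simp add: card_SigmaI)
  also have "\<dots> = (\<Sum>x\<in>words l. 2 ^ (l - k))"
  proof (rule sum.cong[OF refl])
    fix x assume "x \<in> words l"
    hence "length (take k x) = k" using assms by (simp add: words_def)
    thus "card (cylinder l (take k x)) = 2 ^ (l - k)" using card_cylinder[of "take k x" l] assms by simp
  qed
  finally have "card (prefix_pairs l k) = 2 ^ l * 2 ^ (l - k)" by (simp add: card_words)
  moreover have "card (diagonal l) = 2 ^ l"
    unfolding diagonal_def by (subst card_image) (auto simp: inj_on_def card_words)
  ultimately show ?thesis
    unfolding distinct_prefix_pairs_eq
    using card_Diff_subset[OF finite_subset[OF diagonal_subset finite_prefix_pairs] diagonal_subset] by simp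
qed

text \<open>Longer common prefixes give fewer pairs; this yields the monotonicity (b) of the witness.\<close>
lemma distinct_prefix_pairs_antimono: "distinct_prefix_pairs l (Suc k) \<subseteq> distinct_prefix_pairs l k"
proof
  fix p assume "p \<in> distinct_prefix_pairs l (Suc k)"
  then obtain x y where p: "p = (x,y)" "x \<in> words l" "y \<in> words l" "take (Suc k) y = take (Suc k) x" "x \<noteq> y"
    unfolding distinct_prefix_pairs_def prefix_pairs_def by (cases p) auto
  have "take k y = take k x" using arg_cong[OF p(4), of "take k"] by (simp add: min_def)
  thus "p \<in> distinct_prefix_pairs l k" using p unfolding distinct_prefix_pairs_def prefix_pairs_def by auto
qed

lemma distinct_prefix_pair_distance:
  assumes k: "is_kernel l g" and mono: "nondecreasing_below l (partial_dist l g)" and kl: "k < l"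
    and p: "p \<in> distinct_prefix_pairs l k"
  shows "hamming (g (fst p)) (g (snd p)) \<in> {partial_dist l g k..l}"
proof -
  obtain x y where xy: "p = (x,y)" "x \<in> words l" "y \<in> words l" "take k y = take k x" "x \<noteq> y"
    using p unfolding distinct_prefix_pairs_def prefix_pairs_def by (cases p) auto
  have "\<forall>m<k. x ! m = y ! m"
  proof (intro allI impI)
    fix m assume "m < k"
    hence "take k x ! m = x ! m" "take k y ! m = y ! m" by simp_all
    thus "x ! m = y ! m" using xy(4) by simp
  qed
  hence "partial_dist l g k \<le> hamming (g x) (g y)"
    using partial_dist_le_common_prefix[OF kernel_maps_words[OF k] mono kl xy(2) xy(3)] xy(5) by simp
  moreover have "hamming (g x) (g y) \<le> l" using hamming_le_length kernel_maps_words[OF k] xy(2)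
    unfolding maps_words_def words_def by (metis mem_Collect_eq)
  ultimately show ?thesis using xy by simp
qed

text \<open>Delsarte's inequality applied to each prefix class: the Krawtchouk sum over all pairs of
  outputs of inputs sharing a k-prefix is non-negative; removing the diagonal pairs, each
  contributing P_i(0) = binom(l,i), yields the lower bound -binom(l,i) 2^l.\<close>
lemma prefix_pairs_kraw_nonneg:
  assumes m: "maps_words l g" and kl: "k \<le> l"
  shows "0 \<le> (\<Sum>p\<in>prefix_pairs l k. kraw l i (hamming (g (fst p)) (g (snd p))))"
proof -
  let ?F = "\<lambda>x y. kraw l i (hamming (g x) (g y))"
  have "(\<Sum>p\<in>prefix_pairs l k. kraw l i (hamming (g (fst p)) (g (snd p))))
      = (\<Sum>x\<in>words l. \<Sum>y\<in>cylinder l (take k x). ?F x y)"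
    unfolding prefix_pairs_Sigma[OF kl]
    by (subst sum.Sigma) (auto simp: finite_words finite_cylinder case_prod_unfold)
  also have "\<dots> = (\<Sum>w\<in>words k. \<Sum>x\<in>{x\<in>words l. take k x = w}. \<Sum>y\<in>cylinder l (take k x). ?F x y)"
    by (rule sum.group[symmetric]) (use finite_words kl in \<open>auto simp: words_def\<close>)
  also have "\<dots> = (\<Sum>w\<in>words k. \<Sum>x\<in>cylinder l w. \<Sum>y\<in>cylinder l w. ?F x y)"
  proof (rule sum.cong[OF refl])
    fix w assume "w \<in> words k"
    hence lw: "length w = k" by (simp add: words_def)
    have "{x\<in>words l. take k x = w} = cylinder l w" using lw unfolding cylinder_def by simp
    moreover have "\<forall>x\<in>cylinder l w. take k x = w" using lw unfolding cylinder_def by simp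
    ultimately show "(\<Sum>x\<in>{x\<in>words l. take k x = w}. \<Sum>y\<in>cylinder l (take k x). ?F x y)
        = (\<Sum>x\<in>cylinder l w. \<Sum>y\<in>cylinder l w. ?F x y)" by simp
  qed
  also have "\<dots> \<ge> 0"
  proof (rule sum_nonneg)
    fix w assume "w \<in> words k"
    show "0 \<le> (\<Sum>x\<in>cylinder l w. \<Sum>y\<in>cylinder l w. ?F x y)"
      by (rule delsarte_nonneg[OF finite_cylinder]) (use m in \<open>auto simp: maps_words_def cylinder_def words_def\<close>)
  qed
  finally show ?thesis .
qed

lemma distinct_prefix_pairs_kraw_lower:
  assumes m: "maps_words l g" and kl: "k \<le> l"
  shows "- real (l choose i) * 2 ^ l \<le> (\<Sum>p\<in>distinct_prefix_pairs l k. kraw l i (hamming (g (fst p)) (g (snd p))))"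
proof -
  let ?K = "\<lambda>p. kraw l i (hamming (g (fst p)) (g (snd p)))"
  have "(\<Sum>p\<in>prefix_pairs l k. ?K p) = (\<Sum>p\<in>distinct_prefix_pairs l k. ?K p) + (\<Sum>p\<in>diagonal l. ?K p)"
    unfolding distinct_prefix_pairs_eq using sum.subset_diff[OF diagonal_subset finite_prefix_pairs] by simp
  moreover have "(\<Sum>p\<in>diagonal l. ?K p) = real (l choose i) * 2 ^ l"
    unfolding diagonal_def by (subst sum.reindex) (auto simp: inj_on_def hamming_self kraw_at_zero card_words)
  ultimately show ?thesis using prefix_pairs_kraw_nonneg[OF m kl, of i] by simp
qed

text \<open>The LP witness: B^(k)_j is the number of ordered pairs of distinct inputs with a common
  k-prefix whose images are at distance j, divided by 2^l.\<close>
definition distance_distribution :: "nat \<Rightarrow> (bool list \<Rightarrow> bool list) \<Rightarrow> nat \<Rightarrow> nat \<Rightarrow> real" where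
  "distance_distribution l g k j =
     real (card {p \<in> distinct_prefix_pairs l k. hamming (g (fst p)) (g (snd p)) = j}) / 2 ^ l"

lemma distance_distribution_sum:
  fixes F :: "nat \<Rightarrow> real"
  assumes k: "is_kernel l g" and mono: "nondecreasing_below l (partial_dist l g)" and kl: "k < l"
  shows "(\<Sum>j=partial_dist l g k..l. distance_distribution l g k j * F j)
       = (\<Sum>p\<in>distinct_prefix_pairs l k. F (hamming (g (fst p)) (g (snd p)))) / 2 ^ l"
proof -
  let ?h = "\<lambda>p. hamming (g (fst p)) (g (snd p))"
  have "(\<Sum>p\<in>distinct_prefix_pairs l k. F (?h p))
      = (\<Sum>j=partial_dist l g k..l. \<Sum>p\<in>{p\<in>distinct_prefix_pairs l k. ?h p = j}. F (?h p))"
    by (rule sum.group[symmetric])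
      (use finite_distinct_prefix_pairs distinct_prefix_pair_distance[OF k mono kl] in auto)
  also have "\<dots> = (\<Sum>j=partial_dist l g k..l. real (card {p\<in>distinct_prefix_pairs l k. ?h p = j}) * F j)"
    by (rule sum.cong[OF refl]) simp
  finally show ?thesis unfolding distance_distribution_def by (simp add: sum_divide_distrib)
qed

lemma distance_distribution_total:
  assumes k: "is_kernel l g" and mono: "nondecreasing_below l (partial_dist l g)" and kl: "k < l"
  shows "(\<Sum>j=partial_dist l g k..l. distance_distribution l g k j) = 2 ^ (l - k) - 1"
proof -
  have "(\<Sum>j=partial_dist l g k..l. distance_distribution l g k j)
      = real (card (distinct_prefix_pairs l k)) / 2 ^ l"
    using distance_distribution_sum[OF k mono kl, of "\<lambda>_. 1"] by simp
  also have "\<dots> = (2 ^ l * 2 ^ (l - k) - 2 ^ l) / 2 ^ l"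
    using card_distinct_prefix_pairs[of k l] kl by (simp add: of_nat_diff)
  also have "\<dots> = 2 ^ (l - k) - 1" by (simp add: field_simps)
  finally show ?thesis .
qed

lemma distance_distribution_antimono:
  "distance_distribution l g (Suc k) j \<le> distance_distribution l g k j"
proof -
  let ?S = "\<lambda>k. {p \<in> distinct_prefix_pairs l k. hamming (g (fst p)) (g (snd p)) = j}"
  have "?S (Suc k) \<subseteq> ?S k" using distinct_prefix_pairs_antimono by blast
  hence "card (?S (Suc k)) \<le> card (?S k)"
    by (rule card_mono[rotated]) (use finite_distinct_prefix_pairs in auto)
  thus ?thesis unfolding distance_distribution_def by (simp add: divide_right_mono)
qed

lemma distance_distribution_delsarte:
  assumes k: "is_kernel l g" and mono: "nondecreasing_below l (partial_dist l g)" and kl: "k < l"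
  shows "- real (l choose i) \<le> (\<Sum>j=partial_dist l g k..l. distance_distribution l g k j * kraw l i j)"
proof -
  have "- real (l choose i) = (- real (l choose i) * 2 ^ l) / 2 ^ l" by simp
  also have "\<dots> \<le> (\<Sum>p\<in>distinct_prefix_pairs l k. kraw l i (hamming (g (fst p)) (g (snd p)))) / 2 ^ l"
    using distinct_prefix_pairs_kraw_lower[OF kernel_maps_words[OF k]] kl
    by (intro divide_right_mono) auto
  also have "\<dots> = (\<Sum>j=partial_dist l g k..l. distance_distribution l g k j * kraw l i j)"
    using distance_distribution_sum[OF k mono kl] by simp
  finally show ?thesis .
qed

section \<open>LP-validity of the partial distances of a monotone kernel\<close>

lemma finite_code_distances: "C \<subseteq> words n \<Longrightarrow> finite {hamming x y | x y. x \<in> C \<and> y \<in> C \<and> x \<noteq> y}"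
proof -
  assume "C \<subseteq> words n"
  hence "{hamming x y | x y. x \<in> C \<and> y \<in> C \<and> x \<noteq> y} \<subseteq> {..n}"
    using hamming_le_length unfolding words_def by fastforce
  thus ?thesis using finite_subset by blast
qed

lemma finite_code_min_dists: "finite {min_dist C | C. C \<subseteq> words n \<and> card C = 2 ^ k}"
proof -
  have "{min_dist C | C. C \<subseteq> words n \<and> card C = 2 ^ k} \<subseteq> min_dist ` Pow (words n)" by auto
  thus ?thesis using finite_words finite_subset by blast
qed

lemma best_dist_le_length:
  assumes k: "1 \<le> k" "k \<le> n"
  shows "best_dist n k \<le> n"
proof -
  let ?S = "{min_dist C | C. C \<subseteq> words n \<and> card C = 2 ^ k}"
  have "cylinder n (replicate (n - k) False) \<subseteq> words n" unfolding cylinder_def by auto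
  moreover have "card (cylinder n (replicate (n - k) False)) = 2 ^ k"
    using card_cylinder[of "replicate (n - k) False" n] k by simp
  ultimately have "?S \<noteq> {}" by blast
  from Max_in[OF finite_code_min_dists this]
  obtain C where C: "C \<subseteq> words n" "card C = 2 ^ k" "best_dist n k = min_dist C"
    unfolding best_dist_def by auto
  have "finite C" using C finite_words finite_subset by blast
  moreover have "(2::nat) ^ 1 \<le> 2 ^ k" using k by (intro power_increasing) auto
  ultimately obtain x y where xy: "x \<in> C" "y \<in> C" "x \<noteq> y"
    using C card_le_Suc0_iff_eq[of C] by fastforce
  have "min_dist C \<le> hamming x y"
    unfolding min_dist_def by (rule Min_le[OF finite_code_distances[OF C(1)]]) (use xy in blast)
  also have "\<dots> \<le> n" using hamming_le_length[of x y] xy C unfolding words_def by auto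
  finally show ?thesis using C by simp
qed

text \<open>D_i \<le> d(l, l-i): the images of the 2^(l-i) inputs starting with i zeros form a code
  whose minimum distance is at least D_i.\<close>
lemma partial_dist_le_best_dist:
  assumes k: "is_kernel l g" and mono: "nondecreasing_below l (partial_dist l g)" and i: "i < l"
  shows "partial_dist l g i \<le> best_dist l (l - i)"
proof -
  have m: "maps_words l g" using kernel_maps_words[OF k] .
  let ?P = "cylinder l (replicate i False)"
  let ?C = "g ` ?P"
  have Pw: "?P \<subseteq> words l" unfolding cylinder_def by auto
  have Cw: "?C \<subseteq> words l" using m Pw unfolding maps_words_def by auto
  have inj: "inj_on g ?P" using kernel_inj[OF k] Pw inj_on_subset by blast
  have cC: "card ?C = 2 ^ (l - i)"
    using card_image[OF inj] card_cylinder[of "replicate i False" l] i by simp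
  let ?M = "{hamming x y | x y. x \<in> ?C \<and> y \<in> ?C \<and> x \<noteq> y}"
  define a where "a = replicate l False"
  define b where "b = replicate i False @ True # replicate (l - i - 1) False"
  have a: "a \<in> ?P" unfolding a_def cylinder_def words_def using i by (simp add: min_def)
  have b: "b \<in> ?P" unfolding b_def cylinder_def words_def using i by simp
  have "a ! i \<noteq> b ! i" unfolding a_def b_def using i by (simp add: nth_append)
  hence "g a \<noteq> g b" using inj a b by (metis inj_on_def)
  hence M_nonempty: "?M \<noteq> {}" using a b by blast
  have "partial_dist l g i \<le> min_dist ?C"
    unfolding min_dist_def Min_ge_iff[OF finite_code_distances[OF Cw] M_nonempty]
  proof
    fix z assume "z \<in> ?M"
    then obtain x y where xy: "x \<in> ?P" "y \<in> ?P" "z = hamming (g x) (g y)" "g x \<noteq> g y" by blast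
    have "take i x = replicate i False" "take i y = replicate i False" using xy unfolding cylinder_def by auto
    hence "\<forall>m<i. x ! m = y ! m" by (metis nth_take)
    from partial_dist_le_common_prefix[OF m mono i _ _ this] xy Pw
    show "partial_dist l g i \<le> z" by auto
  qed
  also have "\<dots> \<le> best_dist l (l - i)"
    unfolding best_dist_def by (rule Max_ge[OF finite_code_min_dists]) (use Cw cC in blast)
  finally show ?thesis .
qed

lemma kernel_LP_valid:
  assumes k: "is_kernel l g" and mono: "nondecreasing_below l (partial_dist l g)"
  shows "LP_valid l (partial_dist l g)"
  unfolding LP_valid_def
proof (intro conjI exI[of _ "distance_distribution l g"])
  show "\<forall>i j. i \<le> j \<and> j < l \<longrightarrow> partial_dist l g i \<le> partial_dist l g j"
    using mono unfolding nondecreasing_below_def .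
  show "\<forall>i<l. partial_dist l g i \<le> best_dist l (l - i)"
    using partial_dist_le_best_dist[OF k mono] by blast
  show "\<forall>k<l. \<forall>i. partial_dist l g k \<le> i \<and> i \<le> l \<longrightarrow> 0 \<le> distance_distribution l g k i"
    unfolding distance_distribution_def by simp
  show "\<forall>r\<in>{1..l}. (\<Sum>i=partial_dist l g (l - r)..l. distance_distribution l g (l - r) i) = 2 ^ r - 1"
    using distance_distribution_total[OF k mono] by (simp add: Suc_le_eq)
  show "\<forall>r\<in>{1..l-1}. \<forall>i. partial_dist l g (l - r + 1) \<le> i \<and> i \<le> l \<longrightarrow>
      distance_distribution l g (l - r + 1) i \<le> distance_distribution l g (l - r) i"
    using distance_distribution_antimono by simp
  show "\<forall>r\<in>{1..l}. \<forall>i\<le>l. - real (l choose i)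
      \<le> (\<Sum>j=partial_dist l g (l - r)..l. distance_distribution l g (l - r) j * kraw l i j)"
    using distance_distribution_delsarte[OF k mono] by (simp add: Suc_le_eq)
qed

lemma kernel_exponent_seq_value: "kernel_exponent l g = seq_value l (partial_dist l g)"
  unfolding kernel_exponent_def seq_value_def ..

lemma seq_value_log_prod:
  assumes "\<forall>j<l. 0 < D j"
  shows "seq_value l D = 1 / real l * log (real l) (real (seq_prod l D))"
proof -
  have "(\<Sum>j<l. ln (real (D j))) = ln (\<Prod>j<l. real (D j))"
    using assms by (subst ln_prod) auto
  thus ?thesis
    unfolding seq_value_def seq_prod_def log_def by (simp add: sum_divide_distrib[symmetric])
qed

text \<open>Sequences with values in {1..l} have only finitely many values: at most one per
  possible product in {..l^l}.\<close>
definition log_prod_values :: "nat \<Rightarrow> real set" where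
  "log_prod_values l = (\<lambda>n. 1 / real l * log (real l) (real n)) ` {..l ^ l}"

lemma seq_value_in_log_prod_values:
  assumes range: "\<forall>j<l. 0 < D j \<and> D j \<le> l"
  shows "seq_value l D \<in> log_prod_values l"
proof -
  have "seq_prod l D \<le> l ^ l" using range seq_prod_bound by blast
  moreover have "seq_value l D = 1 / real l * log (real l) (real (seq_prod l D))"
    using range seq_value_log_prod by blast
  ultimately show ?thesis unfolding log_prod_values_def by auto
qed

lemma finite_log_prod_values: "finite (log_prod_values l)"
  unfolding log_prod_values_def by simp

lemma finite_LP_values: "finite {seq_value l D | D. LP_valid l D \<and> (\<forall>i<l. 0 < D i)}"
proof (rule finite_subset[OF _ finite_log_prod_values])
  show "{seq_value l D | D. LP_valid l D \<and> (\<forall>i<l. 0 < D i)} \<subseteq> log_prod_values l"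
  proof clarify
    fix D assume LP: "LP_valid l D" and pos: "\<forall>i<l. 0 < D i"
    have "\<forall>j<l. D j \<le> l"
    proof (intro allI impI)
      fix j assume j: "j < l"
      hence "D j \<le> best_dist l (l - j)" using LP unfolding LP_valid_def by blast
      also have "\<dots> \<le> l" using j by (intro best_dist_le_length) auto
      finally show "D j \<le> l" .
    qed
    thus "seq_value l D \<in> log_prod_values l" using pos seq_value_in_log_prod_values by blast
  qed
qed

lemma finite_kernel_exponents: "finite {kernel_exponent l g | g. is_kernel l g}"
proof (rule finite_subset[OF _ finite_log_prod_values])
  show "{kernel_exponent l g | g. is_kernel l g} \<subseteq> log_prod_values l"
    using seq_value_in_log_prod_values kernel_partial_dist_range
    unfolding kernel_exponent_seq_value by blast
qed

text \<open>A potential maximiser attains the optimal exponent E_l, since it maximises the product of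
  the partial distances and log_l is increasing for l \<ge> 2.\<close>
lemma potential_maximiser_E_max:
  assumes max: "potential_maximiser l g" and l: "2 \<le> l"
  shows "E_max l = kernel_exponent l g"
  unfolding E_max_def
proof (rule Max_eqI[OF finite_kernel_exponents])
  have g: "is_kernel l g" using max unfolding potential_maximiser_def by blast
  thus "kernel_exponent l g \<in> {kernel_exponent l h | h. is_kernel l h}" by blast
  fix y assume "y \<in> {kernel_exponent l h | h. is_kernel l h}"
  then obtain h where h: "is_kernel l h" and y: "y = kernel_exponent l h" by blast
  have "0 < seq_prod l (partial_dist l h)"
    unfolding seq_prod_def using partial_dist_pos[OF h] by (intro prod_pos) auto
  hence "log (real l) (real (seq_prod l (partial_dist l h))) \<le> log (real l) (real (seq_prod l (partial_dist l g)))"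
    using potential_maximiser_prod[OF max h] l by (subst log_le_cancel_iff) auto
  thus "y \<le> kernel_exponent l g"
    unfolding y kernel_exponent_seq_value
    using seq_value_log_prod kernel_partial_dist_range[OF g] kernel_partial_dist_range[OF h]
    by (simp add: divide_right_mono)
qed

theorem proposition4:
  fixes l :: nat
  assumes "l \<ge> 2"
  shows "E_max l \<le> Max {seq_value l D | D. LP_valid l D \<and> (\<forall>i<l. 0 < D i)}"
proof -
  obtain g where max: "potential_maximiser l g" using potential_maximiser_exists by blast
  have g: "is_kernel l g" using max unfolding potential_maximiser_def by blast
  have "LP_valid l (partial_dist l g)"
    using kernel_LP_valid[OF g potential_maximiser_nondecreasing[OF max]] .
  moreover have "\<forall>i<l. 0 < partial_dist l g i" using partial_dist_pos[OF g] by blast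
  ultimately have "seq_value l (partial_dist l g) \<le> Max {seq_value l D | D. LP_valid l D \<and> (\<forall>i<l. 0 < D i)}"
    by (intro Max_ge[OF finite_LP_values]) blast
  thus ?thesis using potential_maximiser_E_max[OF max assms] kernel_exponent_seq_value by simp
qed
end
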